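(* Let $a:\mathbb{R}\to\mathbb{R}$ be a function whose restriction to $[0,\infty)$ is continuously differentiable and satisfies \[ \int_0^\infty\exp\Big(-2\int_0^w a(z)\,\mathrm{d}z\Big)\,\mathrm{d}w=\infty . \] Let $\gamma=(a^2+a')/2$ on $[0,\infty)$, and assume the following. - $\inf_{z\ge0}\gamma(z)>-\infty$. - There exist constants $c_1>0$, $c_2>0$ and $n\in\mathbb{N}$ such that for every $\kappa>0$, \[ \sup_{0\le v_1<v_2\le\kappa}\Big|\frac{a'(v_2)-a'(v_1)}{v_2-v_1}\Big|\le c_1+c_2\kappa^n . \] Fix $x>0$, let $\beta$ be a standard three-dimensional Brownian bridge on $[0,1]$, and define for $t\in\mathbb{R}_+$ \[ \xi(t)=\exp(-tI(t)),\qquad I(t)=\int_0^1\gamma\big(|ux\mathrm{e}_1+\sqrt t\,\beta_u|\big)\,\mathrm{d}u, \] where $\mathrm{e}_1=(1,0,0)^\top$. Then for every $T\in\mathbb{R}_+$ there is a random variable $\Phi_T$ such that \[ |\xi(t)-\xi(s)|\le\Phi_T|t-s|\quad\text{for all } s,t\in[0,T], \] and $\mathbb{E}_{\mathsf{BB}^3}[|\Phi_T|^m]<\infty$ for all $m\in\mathbb{N}$.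
   Context: A standard three-dimensional Brownian bridge is a three-dimensional standard Brownian motion on $[0,1]$ started at $0$ and conditioned to return to $0$ at time $1$. $\mathbb{E}_{\mathsf{BB}^3}$ is expectation under its law and $|\cdot|$ is the Euclidean norm. *)

theory Defs
  imports "HOL-Probability.Probability"
begin

definition centered_normal :: "real \<Rightarrow> real measure" where
  "centered_normal v = (if v = 0 then return borel 0
                        else density lborel (normal_density 0 (sqrt v)))"

text \<open>The Gaussian property is expressed by
  requiring every finite linear combination of the coordinates at finitely many
  times to be centered normal with the corresponding variance.\<close>
definition brownian_bridge3 :: "'a measure \<Rightarrow> ('a \<Rightarrow> real \<Rightarrow> real^3) \<Rightarrow> bool" where
  "brownian_bridge3 M B \<longleftrightarrow>
     prob_space M \<and>
     (\<forall>t\<in>{0..1}. (\<lambda>\<omega>. B \<omega> t) \<in> borel_measurable M) \<and>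
     (\<forall>\<omega>\<in>space M. continuous_on {0..1} (B \<omega>)) \<and>
     (\<forall>(ts :: nat \<Rightarrow> real) (c :: nat \<Rightarrow> 3 \<Rightarrow> real) (k :: nat).
        (\<forall>i<k. ts i \<in> {0..1}) \<longrightarrow>
        distr M borel (\<lambda>\<omega>. \<Sum>i<k. \<Sum>j\<in>UNIV. c i j * B \<omega> (ts i) $ j)
          = centered_normal (\<Sum>i<k. \<Sum>i'<k. \<Sum>j\<in>UNIV.
                c i j * c i' j * (min (ts i) (ts i') - ts i * ts i')))"

end

theory Submission
  imports Defs
begin

text \<open>
  On \<open>[0,K]\<close> the potential \<open>\<gamma> = (a\<^sup>2 + a')/2\<close> is Lipschitz with a constant growing
  polynomially in \<open>K\<close>, because \<open>a'\<close> is and \<open>a\<close> is an antiderivative of \<open>a'\<close>. Fix a path \<open>\<beta>\<close>.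
  Writing \<open>t \<gamma>(p\<^sub>t) - s \<gamma>(p\<^sub>s) = (t - s) \<gamma>(p\<^sub>t) + s (\<gamma>(p\<^sub>t) - \<gamma>(p\<^sub>s))\<close> with
  \<open>p\<^sub>r = |u x e\<^sub>1 + \<surd>r \<beta>\<^sub>u|\<close> and using \<open>s |\<surd>t - \<surd>s| \<le> \<surd>T |t - s|\<close>, the difference
  \<open>t I(t) - s I(s)\<close> is at most \<open>|t - s|\<close> times \<open>c \<integral>\<^sub>0\<^sup>1 (1 + |\<beta>\<^sub>u|\<^sup>2)\<^sup>N du\<close>. As \<open>t I(t) \<ge> -T |inf \<gamma>|\<close>,
  \<open>exp (- \<cdot>)\<close> is Lipschitz on the relevant range with constant \<open>exp (T |inf \<gamma>|)\<close>, which gives \<open>\<Phi>\<^sub>T\<close>.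
  By Jensen and Fubini the \<open>m\<close>-th moment of \<open>\<Phi>\<^sub>T\<close> is controlled by \<open>sup\<^sub>u E (1 + |\<beta>\<^sub>u|\<^sup>2)\<^bsup>N m\<^esup>\<close>,
  which is finite since the coordinates of \<open>\<beta>\<^sub>u\<close> are centred Gaussians of variance \<open>u - u\<^sup>2 \<le> 1\<close>.
\<close>

section \<open>Polynomially growing local Lipschitz constants\<close>

definition locally_poly_lipschitz :: "real \<Rightarrow> nat \<Rightarrow> (real \<Rightarrow> real) \<Rightarrow> bool" where
  "locally_poly_lipschitz D N f \<longleftrightarrow>
     (\<forall>K p q. 0 \<le> p \<longrightarrow> 0 \<le> q \<longrightarrow> p \<le> K \<longrightarrow> q \<le> K \<longrightarrow>
        \<bar>f p - f q\<bar> \<le> D * (1 + K) ^ N * \<bar>p - q\<bar>)"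

lemma locally_poly_lipschitzD:
  "locally_poly_lipschitz D N f \<Longrightarrow> 0 \<le> p \<Longrightarrow> 0 \<le> q \<Longrightarrow> p \<le> K \<Longrightarrow> q \<le> K \<Longrightarrow>
     \<bar>f p - f q\<bar> \<le> D * (1 + K) ^ N * \<bar>p - q\<bar>"
  unfolding locally_poly_lipschitz_def by blast

lemma locally_poly_lipschitz_abs_le:
  assumes f: "locally_poly_lipschitz D N f" and "0 \<le> D" "0 \<le> p" "p \<le> K"
  shows "\<bar>f p\<bar> \<le> (\<bar>f 0\<bar> + D) * (1 + K) ^ Suc N"
proof -
  have K: "1 \<le> 1 + K" using assms by linarith
  have "\<bar>f p\<bar> \<le> \<bar>f 0\<bar> + D * (1 + K) ^ N * p"
    using locally_poly_lipschitzD[OF f, of p 0 K] assms by auto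
  also have "\<dots> \<le> \<bar>f 0\<bar> * (1 + K) ^ Suc N + D * (1 + K) ^ N * (1 + K)"
  proof (rule add_mono)
    show "\<bar>f 0\<bar> \<le> \<bar>f 0\<bar> * (1 + K) ^ Suc N"
      using mult_left_mono[OF one_le_power[OF K, of "Suc N"], of "\<bar>f 0\<bar>"] by simp
    show "D * (1 + K) ^ N * p \<le> D * (1 + K) ^ N * (1 + K)"
      using assms by (intro mult_left_mono) auto
  qed
  finally show ?thesis by (simp add: algebra_simps)
qed

lemma locally_poly_lipschitz_mono:
  assumes f: "locally_poly_lipschitz D N f" and "0 \<le> D" "D \<le> D'" "N \<le> N'"
  shows "locally_poly_lipschitz D' N' f"
  unfolding locally_poly_lipschitz_def
proof (intro allI impI)
  fix K p q :: real assume pq: "0 \<le> p" "0 \<le> q" "p \<le> K" "q \<le> K"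
  have "D * (1 + K) ^ N \<le> D' * (1 + K) ^ N'"
    using assms pq by (intro mult_mono power_increasing) auto
  then show "\<bar>f p - f q\<bar> \<le> D' * (1 + K) ^ N' * \<bar>p - q\<bar>"
    using locally_poly_lipschitzD[OF f pq] by (meson abs_ge_zero mult_right_mono order_trans)
qed

lemma locally_poly_lipschitz_add:
  assumes "locally_poly_lipschitz D N f" "locally_poly_lipschitz D' N g"
  shows "locally_poly_lipschitz (D + D') N (\<lambda>z. f z + g z)"
  unfolding locally_poly_lipschitz_def
proof (intro allI impI)
  fix K p q :: real assume pq: "0 \<le> p" "0 \<le> q" "p \<le> K" "q \<le> K"
  have "\<bar>f p + g p - (f q + g q)\<bar> \<le> \<bar>f p - f q\<bar> + \<bar>g p - g q\<bar>" by linarith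
  also have "\<dots> \<le> D * (1 + K) ^ N * \<bar>p - q\<bar> + D' * (1 + K) ^ N * \<bar>p - q\<bar>"
    using locally_poly_lipschitzD[OF assms(1) pq] locally_poly_lipschitzD[OF assms(2) pq]
    by (rule add_mono)
  finally show "\<bar>f p + g p - (f q + g q)\<bar> \<le> (D + D') * (1 + K) ^ N * \<bar>p - q\<bar>"
    by (simp add: algebra_simps)
qed

lemma locally_poly_lipschitz_mult:
  assumes f: "locally_poly_lipschitz D N f" and g: "locally_poly_lipschitz D N g" and D: "0 \<le> D"
  shows "locally_poly_lipschitz (D * (\<bar>f 0\<bar> + \<bar>g 0\<bar> + 2 * D)) (2 * N + 1) (\<lambda>z. f z * g z)"
  unfolding locally_poly_lipschitz_def
proof (intro allI impI)
  fix K p q :: real assume pq: "0 \<le> p" "0 \<le> q" "p \<le> K" "q \<le> K"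
  define L where "L = D * (1 + K) ^ N * \<bar>p - q\<bar>"
  define W where "W = (1 + K) ^ Suc N"
  have L: "0 \<le> L" using D pq by (simp add: L_def)
  have "\<bar>f p * g p - f q * g q\<bar> = \<bar>(f p - f q) * g p + f q * (g p - g q)\<bar>"
    by (simp add: algebra_simps)
  also have "\<dots> \<le> \<bar>f p - f q\<bar> * \<bar>g p\<bar> + \<bar>f q\<bar> * \<bar>g p - g q\<bar>"
    by (metis abs_mult abs_triangle_ineq)
  also have "\<dots> \<le> L * ((\<bar>g 0\<bar> + D) * W) + ((\<bar>f 0\<bar> + D) * W) * L"
  proof (rule add_mono; rule mult_mono)
    show "\<bar>f p - f q\<bar> \<le> L" "\<bar>g p - g q\<bar> \<le> L"
      unfolding L_def using locally_poly_lipschitzD[OF f pq] locally_poly_lipschitzD[OF g pq] .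
    show "\<bar>g p\<bar> \<le> (\<bar>g 0\<bar> + D) * W" "\<bar>f q\<bar> \<le> (\<bar>f 0\<bar> + D) * W"
      unfolding W_def using locally_poly_lipschitz_abs_le[OF g D, of p K]
        locally_poly_lipschitz_abs_le[OF f D, of q K] pq by auto
    have "0 \<le> W" using pq by (simp add: W_def)
    then show "0 \<le> (\<bar>f 0\<bar> + D) * W" using D by simp
  qed (use L in auto)
  also have "\<dots> = D * (\<bar>f 0\<bar> + \<bar>g 0\<bar> + 2 * D) * ((1 + K) ^ N * W) * \<bar>p - q\<bar>"
    unfolding L_def by algebra
  also have "(1 + K) ^ N * W = (1 + K) ^ (2 * N + 1)"
    unfolding W_def by (simp add: mult_2 power_add)
  finally show "\<bar>f p * g p - f q * g q\<bar>
      \<le> D * (\<bar>f 0\<bar> + \<bar>g 0\<bar> + 2 * D) * (1 + K) ^ (2 * N + 1) * \<bar>p - q\<bar>" .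
qed

lemma locally_poly_lipschitz_divide:
  assumes "locally_poly_lipschitz D N f" "0 < c"
  shows "locally_poly_lipschitz (D / c) N (\<lambda>z. f z / c)"
  using assms unfolding locally_poly_lipschitz_def
  by (auto simp: diff_divide_distrib[symmetric] divide_le_eq)

lemma locally_poly_lipschitz_of_derivative:
  assumes deriv: "\<And>z. 0 \<le> z \<Longrightarrow> (f has_real_derivative f' z) (at z within {0..})"
    and f': "locally_poly_lipschitz D N f'" and D: "0 \<le> D"
  shows "locally_poly_lipschitz (\<bar>f' 0\<bar> + D) (Suc N) f"
  unfolding locally_poly_lipschitz_def
proof (intro allI impI)
  fix K p q :: real assume pq: "0 \<le> p" "0 \<le> q" "p \<le> K" "q \<le> K"
  have "norm (f p - f q) \<le> (\<bar>f' 0\<bar> + D) * (1 + K) ^ Suc N * norm (p - q)"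
  proof (rule field_differentiable_bound[of "{0..K}"])
    fix z assume z: "z \<in> {0..K}"
    show "(f has_field_derivative f' z) (at z within {0..K})"
      using deriv[of z] z by (auto intro: DERIV_subset)
    show "norm (f' z) \<le> (\<bar>f' 0\<bar> + D) * (1 + K) ^ Suc N"
      using locally_poly_lipschitz_abs_le[OF f' D, of z K] z by auto
  qed (use pq in auto)
  then show "\<bar>f p - f q\<bar> \<le> (\<bar>f' 0\<bar> + D) * (1 + K) ^ Suc N * \<bar>p - q\<bar>" by simp
qed

lemma locally_poly_lipschitz_of_slope_bound:
  assumes slope: "\<forall>\<kappa>>0. \<forall>v1 v2. 0 \<le> v1 \<longrightarrow> v1 < v2 \<longrightarrow> v2 \<le> \<kappa> \<longrightarrow>
                    \<bar>(f v2 - f v1) / (v2 - v1)\<bar> \<le> c1 + c2 * \<kappa> ^ n"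
    and c: "0 \<le> c1" "0 \<le> c2"
  shows "locally_poly_lipschitz (c1 + c2) n f"
proof -
  have *: "\<bar>f v2 - f v1\<bar> \<le> (c1 + c2) * (1 + K) ^ n * (v2 - v1)"
    if "0 \<le> v1" "v1 < v2" "v2 \<le> K" for v1 v2 K :: real
  proof -
    have "\<bar>f v2 - f v1\<bar> / (v2 - v1) \<le> c1 + c2 * K ^ n"
      using slope that by (auto simp: abs_divide)
    also have "\<dots> \<le> (c1 + c2) * (1 + K) ^ n"
    proof -
      have "1 \<le> (1 + K) ^ n" "K ^ n \<le> (1 + K) ^ n"
        using that by (auto intro: one_le_power power_mono)
      then show ?thesis
        using mult_left_mono[of 1 "(1 + K) ^ n" c1] mult_left_mono[of "K ^ n" "(1 + K) ^ n" c2] c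
        by (simp add: distrib_right)
    qed
    finally show ?thesis using that by (simp add: divide_le_eq)
  qed
  show ?thesis
    unfolding locally_poly_lipschitz_def
  proof (intro allI impI)
    fix K p q :: real assume pq: "0 \<le> p" "0 \<le> q" "p \<le> K" "q \<le> K"
    consider "p < q" | "p = q" | "q < p" by linarith
    then show "\<bar>f p - f q\<bar> \<le> (c1 + c2) * (1 + K) ^ n * \<bar>p - q\<bar>"
      by cases (use *[of p q K] *[of q p K] pq in \<open>auto simp: abs_minus_commute\<close>)
  qed
qed

lemma gamma_locally_poly_lipschitz:
  fixes a a' :: "real \<Rightarrow> real"
  assumes deriv: "\<And>z. 0 \<le> z \<Longrightarrow> (a has_real_derivative a' z) (at z within {0..})"
    and slope: "\<forall>\<kappa>>0. \<forall>v1 v2. 0 \<le> v1 \<longrightarrow> v1 < v2 \<longrightarrow> v2 \<le> \<kappa> \<longrightarrow>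
                  \<bar>(a' v2 - a' v1) / (v2 - v1)\<bar> \<le> c1 + c2 * \<kappa> ^ n"
    and c: "0 \<le> c1" "0 \<le> c2"
  shows "\<exists>D N. 0 \<le> D \<and> locally_poly_lipschitz D N (\<lambda>z. (a z ^ 2 + a' z) / 2)"
proof -
  define Da where "Da = \<bar>a' 0\<bar> + (c1 + c2)"
  define Daa where "Daa = Da * (\<bar>a 0\<bar> + \<bar>a 0\<bar> + 2 * Da)"
  define N where "N = 2 * Suc n + 1"
  have a': "locally_poly_lipschitz (c1 + c2) n a'"
    by (rule locally_poly_lipschitz_of_slope_bound[OF slope c])
  have a: "locally_poly_lipschitz Da (Suc n) a"
    unfolding Da_def using locally_poly_lipschitz_of_derivative[OF deriv a'] c by simp
  have Da: "0 \<le> Da" using c by (simp add: Da_def)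
  have "locally_poly_lipschitz Daa N (\<lambda>z. a z * a z)"
    unfolding Daa_def N_def by (rule locally_poly_lipschitz_mult[OF a a Da])
  moreover have "locally_poly_lipschitz (c1 + c2) N a'"
    by (rule locally_poly_lipschitz_mono[OF a']) (use c in \<open>auto simp: N_def\<close>)
  ultimately have "locally_poly_lipschitz (Daa + (c1 + c2)) N (\<lambda>z. a z ^ 2 + a' z)"
    unfolding power2_eq_square by (rule locally_poly_lipschitz_add)
  then have "locally_poly_lipschitz ((Daa + (c1 + c2)) / 2) N (\<lambda>z. (a z ^ 2 + a' z) / 2)"
    by (rule locally_poly_lipschitz_divide) simp
  moreover have "0 \<le> (Daa + (c1 + c2)) / 2" using Da c by (simp add: Daa_def)
  ultimately show ?thesis by blast
qed

section \<open>Pathwise Lipschitz estimate\<close>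

lemma abs_exp_minus_diff_le:
  fixes A B c :: real
  assumes "- c \<le> A" "- c \<le> B"
  shows "\<bar>exp (- A) - exp (- B)\<bar> \<le> exp c * \<bar>A - B\<bar>"
proof -
  have *: "\<bar>exp (- A) - exp (- B)\<bar> \<le> exp c * (B - A)" if "- c \<le> A" "A \<le> B" for A B
  proof -
    have "exp (- A) - exp (- B) = exp (- A) * (1 - exp (A - B))"
      by (simp add: algebra_simps flip: exp_add)
    also have "\<dots> \<le> exp (- A) * (B - A)"
      using exp_ge_add_one_self[of "A - B"] by (intro mult_left_mono) (linarith, simp)
    also have "\<dots> \<le> exp c * (B - A)"
      using that by (intro mult_right_mono) auto
    finally show ?thesis using that by simp
  qed
  show ?thesis
    using *[of A B] *[of B A] assms by (cases "A \<le> B") (auto simp: abs_minus_commute)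
qed

lemma sqrt_increment_le:
  fixes s t T :: real
  assumes "0 \<le> s" "s \<le> T" "0 \<le> t"
  shows "s * \<bar>sqrt t - sqrt s\<bar> \<le> sqrt T * \<bar>t - s\<bar>"
proof -
  have "s = sqrt s * sqrt s" using assms by simp
  also have "\<dots> \<le> sqrt T * (sqrt t + sqrt s)"
    using assms by (intro mult_mono) auto
  finally have "s * \<bar>sqrt t - sqrt s\<bar> \<le> sqrt T * (sqrt t + sqrt s) * \<bar>sqrt t - sqrt s\<bar>"
    by (rule mult_right_mono) simp
  also have "\<dots> = sqrt T * ((sqrt t + sqrt s) * \<bar>sqrt t - sqrt s\<bar>)"
    by (rule mult.assoc)
  also have "(sqrt t + sqrt s) * \<bar>sqrt t - sqrt s\<bar> = \<bar>(sqrt t + sqrt s) * (sqrt t - sqrt s)\<bar>"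
    using assms by (simp add: abs_mult)
  also have "\<dots> = \<bar>t - s\<bar>"
    using assms by (simp add: algebra_simps)
  finally show ?thesis .
qed

lemma abs_mult_diff_le:
  fixes a b s t :: real
  assumes "0 \<le> s"
  shows "\<bar>t * a - s * b\<bar> \<le> \<bar>t - s\<bar> * \<bar>a\<bar> + s * \<bar>a - b\<bar>"
proof -
  have "\<bar>t * a - s * b\<bar> = \<bar>(t - s) * a + s * (a - b)\<bar>" by (simp add: algebra_simps)
  also have "\<dots> \<le> \<bar>t - s\<bar> * \<bar>a\<bar> + s * \<bar>a - b\<bar>"
    using assms by (simp add: abs_mult abs_triangle_ineq[THEN order_trans])
  finally show ?thesis .
qed

lemma scaled_norm_increment_le:
  fixes v w :: "'a::real_normed_vector"
  assumes g: "locally_poly_lipschitz D N g" and D: "0 \<le> D" and v: "norm v \<le> x"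
    and s: "s \<in> {0..T}" and t: "t \<in> {0..T}"
  defines "K \<equiv> x + sqrt T * norm w"
  shows "\<bar>t * g (norm (v + sqrt t *\<^sub>R w)) - s * g (norm (v + sqrt s *\<^sub>R w))\<bar>
         \<le> \<bar>t - s\<bar> * (\<bar>g 0\<bar> + D * (1 + K) ^ N * (K + sqrt T * norm w))"
proof -
  define p where "p = norm (v + sqrt t *\<^sub>R w)"
  define q where "q = norm (v + sqrt s *\<^sub>R w)"
  define L where "L = D * (1 + K) ^ N"
  have "0 \<le> x" using v norm_ge_zero order_trans by blast
  then have K: "0 \<le> K" using s by (simp add: K_def)
  have L: "0 \<le> L" using D K by (simp add: L_def)
  have norm_le: "norm (v + r *\<^sub>R w) \<le> K" if "0 \<le> r" "r \<le> sqrt T" for r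
  proof -
    have "norm (v + r *\<^sub>R w) \<le> norm v + r * norm w"
      using norm_triangle_ineq[of v "r *\<^sub>R w"] that by simp
    also have "\<dots> \<le> x + sqrt T * norm w"
      using v that by (intro add_mono mult_right_mono) auto
    finally show ?thesis by (simp add: K_def)
  qed
  have pK: "p \<le> K" "q \<le> K" using s t by (auto simp: p_def q_def intro!: norm_le)
  have "\<bar>p - q\<bar> \<le> norm ((v + sqrt t *\<^sub>R w) - (v + sqrt s *\<^sub>R w))"
    unfolding p_def q_def by (rule norm_triangle_ineq3)
  also have "\<dots> = \<bar>sqrt t - sqrt s\<bar> * norm w"
    by (simp flip: scaleR_diff_left)
  finally have pq: "\<bar>p - q\<bar> \<le> \<bar>sqrt t - sqrt s\<bar> * norm w" .
  have gp: "\<bar>g p\<bar> \<le> \<bar>g 0\<bar> + L * K"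
  proof -
    have "\<bar>g p - g 0\<bar> \<le> L * p"
      using locally_poly_lipschitzD[OF g, of p 0 K] pK K by (simp add: L_def p_def)
    also have "\<dots> \<le> L * K" using pK L by (intro mult_left_mono) auto
    finally show ?thesis by linarith
  qed
  have "s * \<bar>g p - g q\<bar> \<le> s * (L * (\<bar>sqrt t - sqrt s\<bar> * norm w))"
    using locally_poly_lipschitzD[OF g, of p q K] pK pq L s
    by (intro mult_left_mono) (auto simp: L_def p_def q_def intro: order_trans mult_left_mono)
  also have "\<dots> = (s * \<bar>sqrt t - sqrt s\<bar>) * (L * norm w)" by (simp add: algebra_simps)
  also have "\<dots> \<le> (sqrt T * \<bar>t - s\<bar>) * (L * norm w)"
    using sqrt_increment_le[of s T t] s t L by (intro mult_right_mono) auto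
  finally have gpq: "s * \<bar>g p - g q\<bar> \<le> \<bar>t - s\<bar> * (L * (sqrt T * norm w))"
    by (simp add: algebra_simps)
  have "\<bar>t * g p - s * g q\<bar> \<le> \<bar>t - s\<bar> * \<bar>g p\<bar> + s * \<bar>g p - g q\<bar>"
    using abs_mult_diff_le[of s t "g p" "g q"] s by simp
  also have "\<dots> \<le> \<bar>t - s\<bar> * (\<bar>g 0\<bar> + L * K) + \<bar>t - s\<bar> * (L * (sqrt T * norm w))"
    using gp gpq by (intro add_mono mult_left_mono) auto
  finally show ?thesis by (simp add: p_def q_def L_def algebra_simps)
qed

lemma increment_weight_le:
  fixes g0 D x T y :: real
  assumes "0 \<le> g0" "0 \<le> D" "0 \<le> x" "0 \<le> T" "0 \<le> y"
  defines "K \<equiv> x + sqrt T * y"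
  shows "g0 + D * (1 + K) ^ N * (K + sqrt T * y)
         \<le> 2 ^ Suc N * (g0 + D * (1 + x + sqrt T) ^ N * (x + 2 * sqrt T)) * (1 + y\<^sup>2) ^ Suc N"
proof -
  define S where "S = sqrt T"
  have S: "0 \<le> S" using assms by (simp add: S_def)
  have "(1 + K) ^ N \<le> ((1 + x + S) * (1 + y)) ^ N"
    using assms S by (intro power_mono) (auto simp: K_def S_def algebra_simps)
  then have "(1 + K) ^ N \<le> (1 + x + S) ^ N * (1 + y) ^ N"
    by (simp only: power_mult_distrib)
  moreover have "K + S * y \<le> (x + 2 * S) * (1 + y)"
    using assms S by (simp add: K_def S_def algebra_simps)
  ultimately have "D * (1 + K) ^ N * (K + S * y)
      \<le> D * ((1 + x + S) ^ N * (1 + y) ^ N) * ((x + 2 * S) * (1 + y))"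
    using assms S by (intro mult_mono) (auto simp: K_def S_def)
  moreover have "g0 \<le> g0 * (1 + y) ^ Suc N"
    using assms mult_left_mono[of 1 "(1 + y) ^ Suc N" g0] one_le_power[of "1 + y" "Suc N"] by simp
  moreover have "g0 * (1 + y) ^ Suc N + D * ((1 + x + S) ^ N * (1 + y) ^ N) * ((x + 2 * S) * (1 + y))
      = (g0 + D * (1 + x + S) ^ N * (x + 2 * S)) * (1 + y) ^ Suc N"
    by (simp add: algebra_simps)
  ultimately have "g0 + D * (1 + K) ^ N * (K + S * y)
      \<le> (g0 + D * (1 + x + S) ^ N * (x + 2 * S)) * (1 + y) ^ Suc N"
    by linarith
  also have "\<dots> \<le> (g0 + D * (1 + x + S) ^ N * (x + 2 * S)) * (2 * (1 + y\<^sup>2)) ^ Suc N"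
  proof (intro mult_left_mono power_mono)
    show "1 + y \<le> 2 * (1 + y\<^sup>2)"
    proof -
      have "0 \<le> (y - 1)\<^sup>2" by simp
      then have "2 * y \<le> y\<^sup>2 + 1" unfolding power2_diff by simp
      then show ?thesis using zero_le_power2[of y] by argo
    qed
  qed (use assms S in auto)
  also have "\<dots> = 2 ^ Suc N * (g0 + D * (1 + x + S) ^ N * (x + 2 * S)) * (1 + y\<^sup>2) ^ Suc N"
    by (simp only: power_mult_distrib mult_ac)
  finally show ?thesis unfolding S_def .
qed

lemma exp_path_integral_lipschitz:
  fixes v w :: "real \<Rightarrow> 'a::real_normed_vector"
  assumes g_cont: "continuous_on {0..} g" and g: "locally_poly_lipschitz D N g" and D: "0 \<le> D"
    and g_ge: "\<And>z. 0 \<le> z \<Longrightarrow> C \<le> g z"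
    and v_cont: "continuous_on {0..1} v" and v: "\<And>u. u \<in> {0..1} \<Longrightarrow> norm (v u) \<le> x"
    and w_cont: "continuous_on {0..1} w"
    and s: "s \<in> {0..T}" and t: "t \<in> {0..T}"
  defines "W \<equiv> 2 ^ Suc N * (\<bar>g 0\<bar> + D * (1 + x + sqrt T) ^ N * (x + 2 * sqrt T))"
  shows "\<bar>exp (- t * integral {0..1} (\<lambda>u. g (norm (v u + sqrt t *\<^sub>R w u))))
          - exp (- s * integral {0..1} (\<lambda>u. g (norm (v u + sqrt s *\<^sub>R w u))))\<bar>
         \<le> exp (T * \<bar>C\<bar>) * W * integral {0..1} (\<lambda>u. (1 + norm (w u) ^ 2) ^ Suc N) * \<bar>t - s\<bar>"
proof -
  define G where "G r = (\<lambda>u. g (norm (v u + r *\<^sub>R w u)))" for r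
  define I where "I r = r * integral {0..1} (G (sqrt r))" for r
  define R where "R = (\<lambda>u. W * (1 + norm (w u) ^ 2) ^ Suc N)"
  have x: "0 \<le> x" using order_trans[OF norm_ge_zero v[of 0]] by simp
  have G_cont: "continuous_on {0..1} (G r)" for r
    unfolding G_def
    by (rule continuous_on_compose2[OF g_cont]) (intro continuous_intros v_cont w_cont, auto)
  have G_int: "G r integrable_on {0..1}" for r
    by (rule integrable_continuous_interval[OF G_cont])
  have R_cont: "continuous_on {0..1} R"
    unfolding R_def by (intro continuous_intros w_cont)
  have "\<bar>t * G (sqrt t) u - s * G (sqrt s) u\<bar> \<le> \<bar>t - s\<bar> * R u" if "u \<in> {0..1}" for u
  proof -
    define y where "y = norm (w u)"
    define K where "K = x + sqrt T * y"
    have "\<bar>t * G (sqrt t) u - s * G (sqrt s) u\<bar>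
        \<le> \<bar>t - s\<bar> * (\<bar>g 0\<bar> + D * (1 + K) ^ N * (K + sqrt T * y))"
      unfolding G_def K_def y_def by (rule scaled_norm_increment_le[OF g D v[OF that] s t])
    also have "\<dots> \<le> \<bar>t - s\<bar> * R u"
      unfolding R_def W_def K_def y_def
      by (intro mult_left_mono increment_weight_le) (use D x s in auto)
    finally show ?thesis .
  qed
  then have "norm (integral {0..1} (\<lambda>u. t * G (sqrt t) u - s * G (sqrt s) u))
      \<le> integral {0..1} (\<lambda>u. \<bar>t - s\<bar> * R u)"
    by (intro integral_norm_bound_integral integrable_continuous_interval continuous_intros
        G_cont R_cont) auto
  then have I_diff: "\<bar>I t - I s\<bar> \<le> \<bar>t - s\<bar> * integral {0..1} R"
    unfolding I_def
    by (simp add: integral_diff integrable_continuous_interval G_cont continuous_intros)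
  have I_ge: "- (T * \<bar>C\<bar>) \<le> I r" if "r \<in> {0..T}" for r
  proof -
    have "integral {0..1} (\<lambda>_::real. C) \<le> integral {0..1} (G (sqrt r))"
      using G_int by (intro Henstock_Kurzweil_Integration.integral_le) (auto simp: G_def g_ge)
    then have "C \<le> integral {0..1} (G (sqrt r))" by simp
    then have "r * (- \<bar>C\<bar>) \<le> I r"
      unfolding I_def using that by (intro mult_left_mono) auto
    moreover have "T * (- \<bar>C\<bar>) \<le> r * (- \<bar>C\<bar>)"
      using that by (intro mult_right_mono_neg) auto
    ultimately show ?thesis by simp
  qed
  have "\<bar>exp (- I t) - exp (- I s)\<bar> \<le> exp (T * \<bar>C\<bar>) * (\<bar>t - s\<bar> * integral {0..1} R)"
    using abs_exp_minus_diff_le[OF I_ge[OF t] I_ge[OF s]] I_diff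
    by (meson exp_ge_zero mult_left_mono order_trans)
  then show ?thesis
    by (simp add: I_def G_def R_def mult_ac)
qed

section \<open>Integrals of random continuous paths\<close>

lemma power_integral_le_integral_power:
  fixes f :: "real \<Rightarrow> real"
  assumes f_cont: "continuous_on {0..1} f" and f_nonneg: "\<And>u. u \<in> {0..1} \<Longrightarrow> 0 \<le> f u"
  shows "integral {0..1} f ^ m \<le> integral {0..1} (\<lambda>u. f u ^ m)"
proof -
  define c where "c = integral {0..1} f"
  have f_int: "f integrable_on {0..1}"
    by (rule integrable_continuous_interval[OF f_cont])
  have fm_int: "(\<lambda>u. f u ^ m) integrable_on {0..1}"
    by (intro integrable_continuous_interval continuous_intros f_cont)
  have c: "0 \<le> c" unfolding c_def using f_nonneg by (intro integral_nonneg f_int) auto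
  consider "m = 0" | "c = 0" "m \<noteq> 0" | "0 < c" using c by linarith
  then show ?thesis
  proof cases
    case 2
    have "0 \<le> integral {0..1} (\<lambda>u. f u ^ m)"
      using f_nonneg by (intro integral_nonneg fm_int) auto
    then show ?thesis using 2 by (simp add: c_def[symmetric] power_0_left)
  next
    case 3
    define h where "h u = c ^ m * (1 - real m) + c ^ m * real m / c * f u" for u
    have "h u \<le> f u ^ m" if "u \<in> {0..1}" for u
    proof -
      have "c ^ m * (1 + real m * (f u / c - 1)) \<le> c ^ m * (1 + (f u / c - 1)) ^ m"
        using Bernoulli_inequality[of "f u / c - 1" m] f_nonneg[OF that] 3
        by (intro mult_left_mono) auto
      then show ?thesis using 3 by (simp add: h_def power_divide field_simps)
    qed
    moreover have "h integrable_on {0..1}"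
      unfolding h_def by (intro integrable_continuous_interval continuous_intros f_cont)
    ultimately have "integral {0..1} h \<le> integral {0..1} (\<lambda>u. f u ^ m)"
      by (intro Henstock_Kurzweil_Integration.integral_le fm_int)
    also have "integral {0..1} h = c ^ m * (1 - real m) + c ^ m * real m / c * c"
      unfolding h_def using 3
      by (subst integral_add) (auto simp: c_def intro!: integrable_continuous_interval continuous_intros f_cont)
    also have "\<dots> = c ^ m"
      using 3 by (simp add: algebra_simps)
    finally show ?thesis by (simp add: c_def)
  qed simp
qed

lemma floor_grid_LIMSEQ:
  "(\<lambda>n. of_int \<lfloor>real (Suc n) * y\<rfloor> / real (Suc n)) \<longlonglongrightarrow> y"
proof (rule real_tendsto_sandwich)
  show "\<forall>\<^sub>F n in sequentially. y - inverse (real (Suc n)) \<le> of_int \<lfloor>real (Suc n) * y\<rfloor> / real (Suc n)"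
  proof (intro always_eventually allI)
    fix n
    have "y - inverse (real (Suc n)) = (real (Suc n) * y - 1) / real (Suc n)"
      by (simp add: field_simps)
    also have "\<dots> \<le> of_int \<lfloor>real (Suc n) * y\<rfloor> / real (Suc n)"
      by (intro divide_right_mono) linarith+
    finally show "y - inverse (real (Suc n)) \<le> of_int \<lfloor>real (Suc n) * y\<rfloor> / real (Suc n)" .
  qed
  show "\<forall>\<^sub>F n in sequentially. of_int \<lfloor>real (Suc n) * y\<rfloor> / real (Suc n) \<le> y"
    by (intro always_eventually allI) (simp add: divide_le_eq mult.commute)
  show "(\<lambda>n. y - inverse (real (Suc n))) \<longlonglongrightarrow> y"
    using tendsto_diff[OF tendsto_const LIMSEQ_inverse_real_of_nat] by simp
qed simp

text \<open>A process is only assumed measurable at times in \<open>[0,1]\<close>; clamping the time parameter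
  extends it to all of \<open>\<real>\<close>, and continuous paths make the extension jointly measurable.\<close>

lemma continuous_process_clamped_measurable:
  fixes X :: "'w \<Rightarrow> real \<Rightarrow> 'b::metric_space"
  assumes X_meas: "\<And>t. t \<in> {0..1} \<Longrightarrow> (\<lambda>\<omega>. X \<omega> t) \<in> borel_measurable M"
    and X_cont: "\<And>\<omega>. \<omega> \<in> space M \<Longrightarrow> continuous_on {0..1} (X \<omega>)"
  shows "(\<lambda>z. X (fst z) (max 0 (min 1 (snd z)))) \<in> borel_measurable (M \<Otimes>\<^sub>M lborel)"
proof -
  define cl :: "real \<Rightarrow> real" where "cl u = max 0 (min 1 u)" for u
  define r where "r n u = cl (of_int \<lfloor>real (Suc n) * cl u\<rfloor> / real (Suc n))" for n u
  have cl: "cl u \<in> {0..1}" for u by (simp add: cl_def)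
  have "(\<lambda>z. X (fst z) (r n (snd z))) \<in> borel_measurable (M \<Otimes>\<^sub>M lborel)" for n
  proof -
    have "(\<lambda>z. X (fst z) (cl (of_int k / real (Suc n)))) \<in> borel_measurable (M \<Otimes>\<^sub>M lborel)" for k :: int
      using measurable_compose[OF measurable_fst X_meas[OF cl]] by (simp add: comp_def)
    moreover have "(\<lambda>z. \<lfloor>real (Suc n) * cl (snd z)\<rfloor>) \<in> measurable (M \<Otimes>\<^sub>M lborel) (count_space UNIV)"
      unfolding cl_def by measurable
    ultimately show ?thesis
      unfolding r_def by (rule measurable_compose_countable)
  qed
  moreover have "(\<lambda>n. X (fst z) (r n (snd z))) \<longlonglongrightarrow> X (fst z) (cl (snd z))"
    if "z \<in> space (M \<Otimes>\<^sub>M lborel)" for z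
  proof (rule continuous_on_tendsto_compose[OF X_cont _ cl])
    show "fst z \<in> space M" using that by (auto simp: space_pair_measure)
    have "(\<lambda>n. r n (snd z)) \<longlonglongrightarrow> max 0 (min 1 (cl (snd z)))"
      unfolding r_def cl_def[of "of_int _ / _"]
      by (intro tendsto_max tendsto_min tendsto_const floor_grid_LIMSEQ)
    moreover have "max 0 (min 1 (cl (snd z))) = cl (snd z)" using cl[of "snd z"] by simp
    ultimately show "(\<lambda>n. r n (snd z)) \<longlonglongrightarrow> cl (snd z)" by simp
  qed (auto simp: r_def cl_def)
  ultimately show ?thesis
    unfolding cl_def by (rule borel_measurable_LIMSEQ_metric)
qed

lemma nn_integral_clamped_eq_integral:
  fixes f :: "real \<Rightarrow> real"
  assumes f_cont: "continuous_on {0..1} f" and f_nonneg: "\<And>u. u \<in> {0..1} \<Longrightarrow> 0 \<le> f u"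
  shows "(\<integral>\<^sup>+ u. ennreal (indicator {0..1} u * f (max 0 (min 1 u))) \<partial>lborel) = ennreal (integral {0..1} f)"
proof -
  have "(\<integral>\<^sup>+ u. ennreal (indicator {0..1} u * f (max 0 (min 1 u))) \<partial>lborel)
      = (\<integral>\<^sup>+ u. ennreal (indicator {0..1} u * f u) \<partial>lborel)"
    by (intro nn_integral_cong) (auto simp: indicator_def)
  also have "\<dots> = ennreal (integral {0..1} f)"
    using f_nonneg integrable_continuous_interval[OF f_cont]
    by (intro nn_integral_has_integral_lebesgue) (auto simp: has_integral_integral)
  finally show ?thesis .
qed

lemma path_integral_measurable:
  fixes F :: "'w \<Rightarrow> real \<Rightarrow> real"
  assumes F_cont: "\<And>\<omega>. \<omega> \<in> space M \<Longrightarrow> continuous_on {0..1} (F \<omega>)"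
    and F_nonneg: "\<And>\<omega> u. 0 \<le> F \<omega> u"
    and F_meas[measurable]: "(\<lambda>z. F (fst z) (max 0 (min 1 (snd z)))) \<in> borel_measurable (M \<Otimes>\<^sub>M lborel)"
  shows "(\<lambda>\<omega>. integral {0..1} (F \<omega>)) \<in> borel_measurable M"
proof -
  have "(\<lambda>z. ennreal (indicator {0..1} (snd z) * F (fst z) (max 0 (min 1 (snd z)))))
      \<in> borel_measurable (M \<Otimes>\<^sub>M lborel)"
    by measurable
  then have "(\<lambda>\<omega>. enn2real (\<integral>\<^sup>+ u. ennreal (indicator {0..1} u * F \<omega> (max 0 (min 1 u))) \<partial>lborel))
      \<in> borel_measurable M"
    using lborel.borel_measurable_nn_integral by (simp add: split_beta')
  moreover have "enn2real (\<integral>\<^sup>+ u. ennreal (indicator {0..1} u * F \<omega> (max 0 (min 1 u))) \<partial>lborel)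
      = integral {0..1} (F \<omega>)" if "\<omega> \<in> space M" for \<omega>
    using F_nonneg integral_nonneg[OF integrable_continuous_interval[OF F_cont[OF that]]]
    by (simp add: nn_integral_clamped_eq_integral F_cont[OF that])
  ultimately show ?thesis by (simp cong: measurable_cong)
qed

lemma path_integral_moment_le:
  fixes F :: "'w \<Rightarrow> real \<Rightarrow> real"
  assumes "sigma_finite_measure M"
    and F_cont: "\<And>\<omega>. \<omega> \<in> space M \<Longrightarrow> continuous_on {0..1} (F \<omega>)"
    and F_nonneg: "\<And>\<omega> u. 0 \<le> F \<omega> u"
    and F_meas[measurable]: "(\<lambda>z. F (fst z) (max 0 (min 1 (snd z)))) \<in> borel_measurable (M \<Otimes>\<^sub>M lborel)"
    and moment: "\<And>u. u \<in> {0..1} \<Longrightarrow> (\<integral>\<^sup>+ \<omega>. ennreal (F \<omega> u ^ m) \<partial>M) \<le> C"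
  shows "(\<integral>\<^sup>+ \<omega>. ennreal (integral {0..1} (F \<omega>) ^ m) \<partial>M) \<le> C"
proof -
  interpret pair_sigma_finite M lborel
    unfolding pair_sigma_finite_def using assms(1) sigma_finite_lborel by simp
  define G where "G \<omega> u = ennreal (indicator {0..1} u * F \<omega> (max 0 (min 1 u)) ^ m)" for \<omega> u
  have [measurable]: "(\<lambda>z. G (fst z) (snd z)) \<in> borel_measurable (M \<Otimes>\<^sub>M lborel)"
    unfolding G_def by measurable
  have "(\<integral>\<^sup>+ \<omega>. ennreal (integral {0..1} (F \<omega>) ^ m) \<partial>M) \<le> (\<integral>\<^sup>+ \<omega>. (\<integral>\<^sup>+ u. G \<omega> u \<partial>lborel) \<partial>M)"
  proof (rule nn_integral_mono)
    fix \<omega> assume \<omega>: "\<omega> \<in> space M"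
    have "ennreal (integral {0..1} (F \<omega>) ^ m) \<le> ennreal (integral {0..1} (\<lambda>u. F \<omega> u ^ m))"
      by (rule ennreal_leI[OF power_integral_le_integral_power[OF F_cont[OF \<omega>] F_nonneg]])
    also have "ennreal (integral {0..1} (\<lambda>u. F \<omega> u ^ m)) = (\<integral>\<^sup>+ u. G \<omega> u \<partial>lborel)"
      unfolding G_def using F_nonneg
      by (subst nn_integral_clamped_eq_integral) (auto intro!: continuous_intros F_cont[OF \<omega>])
    finally show "ennreal (integral {0..1} (F \<omega>) ^ m) \<le> (\<integral>\<^sup>+ u. G \<omega> u \<partial>lborel)" .
  qed
  also have "\<dots> = (\<integral>\<^sup>+ u. (\<integral>\<^sup>+ \<omega>. G \<omega> u \<partial>M) \<partial>lborel)"
    by (rule Fubini'[symmetric]) measurable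
  also have "\<dots> \<le> (\<integral>\<^sup>+ u. C * indicator {0..1::real} u \<partial>lborel)"
  proof (rule nn_integral_mono)
    fix u :: real
    show "(\<integral>\<^sup>+ \<omega>. G \<omega> u \<partial>M) \<le> C * indicator {0..1} u"
      using moment[of u] by (cases "u \<in> {0..1}") (simp_all add: G_def)
  qed
  also have "\<dots> = C" by (simp add: nn_integral_cmult_indicator)
  finally show ?thesis .
qed

section \<open>Moments of the Brownian bridge\<close>

lemma centered_normal_even_moment_le:
  assumes "0 \<le> v" "v \<le> 1"
  shows "(\<integral>\<^sup>+ y. ennreal (y ^ (2 * k)) \<partial>centered_normal v) \<le> ennreal (fact (2 * k))"
proof (cases "v = 0")
  case True
  then show ?thesis
    by (cases k) (auto simp: centered_normal_def nn_integral_return fact_ge_1)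
next
  case False
  define \<sigma> where "\<sigma> = sqrt v"
  have \<sigma>: "\<sigma>\<^sup>2 = v" "0 < \<sigma>" using assms False by (auto simp: \<sigma>_def)
  have "(\<integral>\<^sup>+ y. ennreal (y ^ (2 * k)) \<partial>centered_normal v)
      = (\<integral>\<^sup>+ y. ennreal (normal_density 0 \<sigma> y * (y - 0) ^ (2 * k)) \<partial>lborel)"
    using False by (simp add: centered_normal_def \<sigma>_def nn_integral_density ennreal_mult' power_even_eq)
  also have "\<dots> = ennreal (fact (2 * k) / ((2 / \<sigma>\<^sup>2) ^ k * fact k))"
  proof -
    have "has_bochner_integral lborel (\<lambda>y. normal_density 0 \<sigma> y * (y - 0) ^ (2 * k))
        (fact (2 * k) / ((2 / \<sigma>\<^sup>2) ^ k * fact k))"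
      using \<sigma>(2) by (rule normal_moment_even)
    then show ?thesis
      by (subst nn_integral_eq_integral) (auto simp: has_bochner_integral_iff)
  qed
  also have "\<dots> \<le> ennreal (fact (2 * k))"
  proof (rule ennreal_leI)
    have "1 \<le> (2 / \<sigma>\<^sup>2) ^ k" using \<sigma> assms False by (intro one_le_power) (simp add: le_divide_eq)
    then have "1 \<le> (2 / \<sigma>\<^sup>2) ^ k * fact k" using fact_ge_1[of k, where 'a=real]
      by (metis mult_mono' mult_1 zero_le_one)
    then show "fact (2 * k) / ((2 / \<sigma>\<^sup>2) ^ k * fact k) \<le> (fact (2 * k) :: real)"
      using divide_left_mono[of 1 _ "fact (2 * k) :: real"] by simp
  qed
  finally show ?thesis .
qed

lemma brownian_bridge3D:
  assumes "brownian_bridge3 M B"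
  shows "prob_space M"
    and "\<And>t. t \<in> {0..1} \<Longrightarrow> (\<lambda>\<omega>. B \<omega> t) \<in> borel_measurable M"
    and "\<And>\<omega>. \<omega> \<in> space M \<Longrightarrow> continuous_on {0..1} (B \<omega>)"
  using assms unfolding brownian_bridge3_def by auto

lemma brownian_bridge3_coordinate_distr:
  assumes BB: "brownian_bridge3 M B" and u: "u \<in> {0..1}"
  shows "distr M borel (\<lambda>\<omega>. B \<omega> u $ j) = centered_normal (u - u * u)"
proof -
  define c where "c i j' = (if j' = j then 1 else 0 :: real)" for i :: nat and j'
  have "\<forall>(ts :: nat \<Rightarrow> real) (c :: nat \<Rightarrow> 3 \<Rightarrow> real) k. (\<forall>i<k. ts i \<in> {0..1}) \<longrightarrow>
        distr M borel (\<lambda>\<omega>. \<Sum>i<k. \<Sum>j\<in>UNIV. c i j * B \<omega> (ts i) $ j)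
          = centered_normal (\<Sum>i<k. \<Sum>i'<k. \<Sum>j\<in>UNIV.
                c i j * c i' j * (min (ts i) (ts i') - ts i * ts i'))"
    using BB unfolding brownian_bridge3_def by blast
  from this[rule_format, where ts = "\<lambda>_. u" and c = c and k = 1]
  have "distr M borel (\<lambda>\<omega>. \<Sum>i<1. \<Sum>j'\<in>UNIV. c i j' * B \<omega> u $ j')
      = centered_normal (\<Sum>i<1. \<Sum>i'<1. \<Sum>j'\<in>UNIV. c i j' * c i' j' * (min u u - u * u))"
    using u by simp
  moreover have "(\<Sum>j'\<in>UNIV. c i j' * f j') = f j" for i and f :: "3 \<Rightarrow> real"
  proof -
    have "(\<Sum>j'\<in>UNIV. c i j' * f j') = (\<Sum>j'\<in>UNIV. if j' = j then f j' else 0)"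
      by (intro sum.cong) (auto simp: c_def)
    then show ?thesis by simp
  qed
  ultimately show ?thesis by (simp add: c_def if_distrib cong: if_cong)
qed

lemma brownian_bridge3_coordinate_moment_le:
  assumes BB: "brownian_bridge3 M B" and u: "u \<in> {0..1}"
  shows "(\<integral>\<^sup>+ \<omega>. ennreal ((B \<omega> u $ j) ^ (2 * k)) \<partial>M) \<le> ennreal (fact (2 * k))"
proof -
  have "(\<lambda>\<omega>. B \<omega> u $ j) \<in> borel_measurable M"
    using measurable_compose[OF brownian_bridge3D(2)[OF BB u] borel_measurable_nth] by simp
  then have "(\<integral>\<^sup>+ \<omega>. ennreal ((B \<omega> u $ j) ^ (2 * k)) \<partial>M)
      = (\<integral>\<^sup>+ y. ennreal (y ^ (2 * k)) \<partial>distr M borel (\<lambda>\<omega>. B \<omega> u $ j))"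
    by (simp add: nn_integral_distr)
  also have "\<dots> = (\<integral>\<^sup>+ y. ennreal (y ^ (2 * k)) \<partial>centered_normal (u - u * u))"
    unfolding brownian_bridge3_coordinate_distr[OF BB u] ..
  also have "\<dots> \<le> ennreal (fact (2 * k))"
  proof (rule centered_normal_even_moment_le)
    have "u * u \<le> u" using u by (auto intro: mult_left_le_one_le)
    then show "0 \<le> u - u * u" by simp
    have "0 \<le> u * u" "u \<le> 1" using u by simp_all
    then show "u - u * u \<le> 1" by linarith
  qed
  finally show ?thesis .
qed

lemma power_add_le_two_power:
  fixes a b :: real
  assumes "0 \<le> a" "0 \<le> b"
  shows "(a + b) ^ q \<le> 2 ^ q * (a ^ q + b ^ q)"
proof -
  have "(a + b) ^ q \<le> (2 * max a b) ^ q" using assms by (intro power_mono) auto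
  also have "\<dots> = 2 ^ q * max a b ^ q" by (simp add: power_mult_distrib)
  also have "\<dots> \<le> 2 ^ q * (a ^ q + b ^ q)"
    using assms by (intro mult_left_mono) (simp_all add: max_def)
  finally show ?thesis .
qed

lemma one_plus_norm_sq_power_le:
  fixes v :: "real^3"
  shows "(1 + norm v ^ 2) ^ q \<le> 4 ^ q * (1 + (\<Sum>j\<in>UNIV. (v $ j) ^ (2 * q)))"
proof -
  define a b c where "a = (v $ 1)\<^sup>2" and "b = (v $ 2)\<^sup>2" and "c = (v $ 3)\<^sup>2"
  have abc: "0 \<le> a" "0 \<le> b" "0 \<le> c" by (simp_all add: a_def b_def c_def)
  have "norm v ^ 2 = a + b + c"
    unfolding power2_norm_eq_inner inner_vec_def sum_3 a_def b_def c_def by (simp add: power2_eq_square)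
  then have "(1 + norm v ^ 2) ^ q = ((1 + a) + (b + c)) ^ q" by (simp add: add.assoc)
  also have "\<dots> \<le> 2 ^ q * ((1 + a) ^ q + (b + c) ^ q)"
    using abc by (intro power_add_le_two_power) auto
  also have "\<dots> \<le> 2 ^ q * (2 ^ q * (1 ^ q + a ^ q) + 2 ^ q * (b ^ q + c ^ q))"
    using abc by (intro mult_left_mono add_mono power_add_le_two_power) auto
  also have "\<dots> = (2 * 2) ^ q * (1 + a ^ q + b ^ q + c ^ q)"
    unfolding power_mult_distrib by (simp add: algebra_simps)
  finally show ?thesis by (simp add: a_def b_def c_def power_mult sum_3 add.assoc)
qed

lemma brownian_bridge3_weight_moment_le:
  assumes BB: "brownian_bridge3 M B" and u: "u \<in> {0..1}"
  shows "(\<integral>\<^sup>+ \<omega>. ennreal ((1 + norm (B \<omega> u) ^ 2) ^ q) \<partial>M) \<le> ennreal (4 ^ q) * (1 + 3 * ennreal (fact (2 * q)))"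
proof -
  interpret prob_space M by (rule brownian_bridge3D(1)[OF BB])
  define e where "e j \<omega> = ennreal ((B \<omega> u $ j) ^ (2 * q))" for j \<omega>
  have [measurable]: "(\<lambda>\<omega>. B \<omega> u $ j) \<in> borel_measurable M" for j
    using measurable_compose[OF brownian_bridge3D(2)[OF BB u] borel_measurable_nth] by simp
  have [measurable]: "e j \<in> borel_measurable M" for j
    unfolding e_def by measurable
  have "(\<integral>\<^sup>+ \<omega>. ennreal ((1 + norm (B \<omega> u) ^ 2) ^ q) \<partial>M)
      \<le> (\<integral>\<^sup>+ \<omega>. ennreal (4 ^ q) * (1 + (\<Sum>j\<in>UNIV. e j \<omega>)) \<partial>M)"
  proof (rule nn_integral_mono)
    fix \<omega>
    have "ennreal ((1 + norm (B \<omega> u) ^ 2) ^ q) \<le> ennreal (4 ^ q * (1 + (\<Sum>j\<in>UNIV. (B \<omega> u $ j) ^ (2 * q))))"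
      by (rule ennreal_leI[OF one_plus_norm_sq_power_le])
    also have "\<dots> = ennreal (4 ^ q) * (1 + (\<Sum>j\<in>UNIV. e j \<omega>))"
      unfolding e_def by (simp add: ennreal_mult ennreal_plus sum_nonneg zero_le_even_power)
    finally show "ennreal ((1 + norm (B \<omega> u) ^ 2) ^ q) \<le> ennreal (4 ^ q) * (1 + (\<Sum>j\<in>UNIV. e j \<omega>))" .
  qed
  also have "\<dots> = ennreal (4 ^ q) * (\<integral>\<^sup>+ \<omega>. 1 + (\<Sum>j\<in>UNIV. e j \<omega>) \<partial>M)"
    by (rule nn_integral_cmult) measurable
  also have "\<dots> = ennreal (4 ^ q) * (1 + (\<Sum>j\<in>UNIV. \<integral>\<^sup>+ \<omega>. e j \<omega> \<partial>M))"
    by (subst nn_integral_add) (simp_all add: nn_integral_sum emeasure_space_1)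
  also have "\<dots> \<le> ennreal (4 ^ q) * (1 + (\<Sum>j\<in>(UNIV :: 3 set). ennreal (fact (2 * q))))"
    unfolding e_def by (intro mult_left_mono add_mono sum_mono brownian_bridge3_coordinate_moment_le[OF BB u]) auto
  also have "\<dots> = ennreal (4 ^ q) * (1 + 3 * ennreal (fact (2 * q)))"
    by simp
  finally show ?thesis .
qed

lemma brownian_bridge3_weight_integral:
  fixes B :: "'w \<Rightarrow> real \<Rightarrow> real^3" and q :: nat
  assumes BB: "brownian_bridge3 M B"
  defines "Y \<equiv> \<lambda>\<omega>. integral {0..1} (\<lambda>u. (1 + norm (B \<omega> u) ^ 2) ^ q)"
  shows "Y \<in> borel_measurable M"
    and "\<And>\<omega>. \<omega> \<in> space M \<Longrightarrow> 0 \<le> Y \<omega>"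
    and "(\<integral>\<^sup>+ \<omega>. ennreal (Y \<omega> ^ m) \<partial>M) < \<infinity>"
proof -
  define F where "F \<omega> u = (1 + norm (B \<omega> u) ^ 2) ^ q" for \<omega> u
  have F_cont: "continuous_on {0..1} (F \<omega>)" if "\<omega> \<in> space M" for \<omega>
    unfolding F_def by (intro continuous_intros brownian_bridge3D(3)[OF BB that])
  have F_nonneg: "0 \<le> F \<omega> u" for \<omega> u by (simp add: F_def)
  have [measurable]: "(\<lambda>z. B (fst z) (max 0 (min 1 (snd z)))) \<in> borel_measurable (M \<Otimes>\<^sub>M lborel)"
    using BB by (intro continuous_process_clamped_measurable brownian_bridge3D)
  have F_meas: "(\<lambda>z. F (fst z) (max 0 (min 1 (snd z)))) \<in> borel_measurable (M \<Otimes>\<^sub>M lborel)"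
    unfolding F_def by measurable
  have Y_eq: "Y = (\<lambda>\<omega>. integral {0..1} (F \<omega>))"
    by (simp add: Y_def F_def[abs_def])
  show "Y \<in> borel_measurable M"
    unfolding Y_eq by (rule path_integral_measurable[OF F_cont F_nonneg F_meas])
  show "0 \<le> Y \<omega>" if "\<omega> \<in> space M" for \<omega>
    unfolding Y_eq using F_nonneg by (intro integral_nonneg integrable_continuous_interval F_cont[OF that]) auto
  interpret prob_space M by (rule brownian_bridge3D(1)[OF BB])
  have "(\<integral>\<^sup>+ \<omega>. ennreal (Y \<omega> ^ m) \<partial>M) \<le> ennreal (4 ^ (q * m)) * (1 + 3 * ennreal (fact (2 * (q * m))))"
    unfolding Y_eq
  proof (rule path_integral_moment_le[OF _ F_cont F_nonneg F_meas])
    show "sigma_finite_measure M" by unfold_locales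
    fix u :: real assume "u \<in> {0..1}"
    then show "(\<integral>\<^sup>+ \<omega>. ennreal (F \<omega> u ^ m) \<partial>M) \<le> ennreal (4 ^ (q * m)) * (1 + 3 * ennreal (fact (2 * (q * m))))"
      unfolding F_def power_mult[symmetric] by (rule brownian_bridge3_weight_moment_le[OF BB])
  qed
  also have "\<dots> < \<infinity>" by (simp add: ennreal_mult_less_top)
  finally show "(\<integral>\<^sup>+ \<omega>. ennreal (Y \<omega> ^ m) \<partial>M) < \<infinity>" .
qed

lemma brownian_bridge3_exp_integral_lipschitz:
  fixes \<gamma> :: "real \<Rightarrow> real" and B :: "'w \<Rightarrow> real \<Rightarrow> real^3"
  assumes BB: "brownian_bridge3 M B"
    and \<gamma>_cont: "continuous_on {0..} \<gamma>" and \<gamma>_lip: "locally_poly_lipschitz D N \<gamma>" and D: "0 \<le> D"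
    and \<gamma>_ge: "\<And>z. 0 \<le> z \<Longrightarrow> C \<le> \<gamma> z"
    and x: "0 \<le> x" and T: "0 \<le> T"
  shows "\<exists>\<Phi> \<in> borel_measurable M.
           (\<forall>\<omega>\<in>space M. \<forall>s\<in>{0..T}. \<forall>t\<in>{0..T}.
              \<bar>exp (- t * integral {0..1} (\<lambda>u. \<gamma> (norm ((u * x) *\<^sub>R axis 1 1 + sqrt t *\<^sub>R B \<omega> u))))
             - exp (- s * integral {0..1} (\<lambda>u. \<gamma> (norm ((u * x) *\<^sub>R axis 1 1 + sqrt s *\<^sub>R B \<omega> u))))\<bar>
              \<le> \<Phi> \<omega> * \<bar>t - s\<bar>) \<and>
           (\<forall>m::nat. (\<integral>\<^sup>+ \<omega>. ennreal (\<bar>\<Phi> \<omega>\<bar> ^ m) \<partial>M) < \<infinity>)"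
proof -
  define Y where "Y \<omega> = integral {0..1} (\<lambda>u. (1 + norm (B \<omega> u) ^ 2) ^ Suc N)" for \<omega>
  define K where "K = exp (T * \<bar>C\<bar>) * (2 ^ Suc N * (\<bar>\<gamma> 0\<bar> + D * (1 + x + sqrt T) ^ N * (x + 2 * sqrt T)))"
  have K: "0 \<le> K" using D x T by (simp add: K_def)
  have Y: "Y \<in> borel_measurable M" "\<And>\<omega>. \<omega> \<in> space M \<Longrightarrow> 0 \<le> Y \<omega>"
    "\<And>m. (\<integral>\<^sup>+ \<omega>. ennreal (Y \<omega> ^ m) \<partial>M) < \<infinity>"
    unfolding Y_def[abs_def] by (fact brownian_bridge3_weight_integral[OF BB])+
  show ?thesis
  proof (intro bexI[of _ "\<lambda>\<omega>. K * Y \<omega>"] conjI ballI allI)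
    fix \<omega> s t assume \<omega>: "\<omega> \<in> space M" and st: "s \<in> {0..T}" "t \<in> {0..T}"
    have v_cont: "continuous_on {0..1} (\<lambda>u. (u * x) *\<^sub>R (axis 1 1 :: real^3))"
      by (intro continuous_intros)
    have v_le: "norm ((u * x) *\<^sub>R (axis 1 1 :: real^3)) \<le> x" if "u \<in> {0..1}" for u
      using that x by (simp add: mult_left_le_one_le)
    note bound = exp_path_integral_lipschitz[OF \<gamma>_cont \<gamma>_lip D \<gamma>_ge v_cont v_le brownian_bridge3D(3)[OF BB \<omega>] st]
    show "\<bar>exp (- t * integral {0..1} (\<lambda>u. \<gamma> (norm ((u * x) *\<^sub>R axis 1 1 + sqrt t *\<^sub>R B \<omega> u))))
        - exp (- s * integral {0..1} (\<lambda>u. \<gamma> (norm ((u * x) *\<^sub>R axis 1 1 + sqrt s *\<^sub>R B \<omega> u))))\<bar>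
        \<le> K * Y \<omega> * \<bar>t - s\<bar>"
      unfolding K_def Y_def
      by (rule bound)
  next
    fix m :: nat
    have "ennreal (\<bar>K * Y \<omega>\<bar> ^ m) = ennreal (K ^ m) * ennreal (Y \<omega> ^ m)" if "\<omega> \<in> space M" for \<omega>
      using K Y(2)[OF that] by (simp add: abs_mult power_mult_distrib ennreal_mult)
    then have "(\<integral>\<^sup>+ \<omega>. ennreal (\<bar>K * Y \<omega>\<bar> ^ m) \<partial>M) = (\<integral>\<^sup>+ \<omega>. ennreal (K ^ m) * ennreal (Y \<omega> ^ m) \<partial>M)"
      by (rule nn_integral_cong)
    also have "\<dots> = ennreal (K ^ m) * (\<integral>\<^sup>+ \<omega>. ennreal (Y \<omega> ^ m) \<partial>M)"
      by (rule nn_integral_cmult) (use Y(1) in measurable)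
    also have "\<dots> < \<infinity>"
      using Y(3) by (simp add: ennreal_mult_less_top)
    finally show "(\<integral>\<^sup>+ \<omega>. ennreal (\<bar>K * Y \<omega>\<bar> ^ m) \<partial>M) < \<infinity>" .
  qed (use Y(1) in measurable)
qed

theorem lemmaA1:
  fixes a a' :: "real \<Rightarrow> real" and x :: real
    and M :: "'w measure" and B :: "'w \<Rightarrow> real \<Rightarrow> real^3"
  assumes deriv: "\<And>z. z \<ge> 0 \<Longrightarrow> (a has_real_derivative a' z) (at z within {0..})"
    and cont_deriv: "continuous_on {0..} a'"
    and scale: "(\<integral>\<^sup>+ w\<in>{0..}. ennreal (exp (- 2 * integral {0..w} a)) \<partial>lborel) = \<infinity>"
    and gamma_bdd: "\<exists>C. \<forall>z\<ge>0. (a z ^ 2 + a' z) / 2 \<ge> C"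
    and lip: "\<exists>c1 c2 (n::nat). c1 > 0 \<and> c2 > 0 \<and>
               (\<forall>\<kappa>>0. \<forall>v1 v2. 0 \<le> v1 \<longrightarrow> v1 < v2 \<longrightarrow> v2 \<le> \<kappa> \<longrightarrow>
                  \<bar>(a' v2 - a' v1) / (v2 - v1)\<bar> \<le> c1 + c2 * \<kappa> ^ n)"
    and x_pos: "x > 0"
    and BB: "brownian_bridge3 M B"
  shows "\<forall>T\<ge>0. \<exists>\<Phi> \<in> borel_measurable M.
           (\<forall>\<omega>\<in>space M. \<forall>s\<in>{0..T}. \<forall>t\<in>{0..T}.
              \<bar>exp (- t * integral {0..1} (\<lambda>u. (\<lambda>z. (a z ^ 2 + a' z) / 2)
                   (norm ((u * x) *\<^sub>R axis 1 1 + sqrt t *\<^sub>R B \<omega> u))))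
             - exp (- s * integral {0..1} (\<lambda>u. (\<lambda>z. (a z ^ 2 + a' z) / 2)
                   (norm ((u * x) *\<^sub>R axis 1 1 + sqrt s *\<^sub>R B \<omega> u))))\<bar>
              \<le> \<Phi> \<omega> * \<bar>t - s\<bar>) \<and>
           (\<forall>m::nat. (\<integral>\<^sup>+ \<omega>. ennreal (\<bar>\<Phi> \<omega>\<bar> ^ m) \<partial>M) < \<infinity>)"
proof -
  define \<gamma> where "\<gamma> = (\<lambda>z. (a z ^ 2 + a' z) / 2)"
  obtain c1 c2 n where c: "0 < c1" "0 < c2" and slope: "\<forall>\<kappa>>0. \<forall>v1 v2. 0 \<le> v1 \<longrightarrow> v1 < v2 \<longrightarrow> v2 \<le> \<kappa> \<longrightarrow>
      \<bar>(a' v2 - a' v1) / (v2 - v1)\<bar> \<le> c1 + c2 * \<kappa> ^ n"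
    using lip by blast
  then obtain D N where D: "0 \<le> D" and \<gamma>_lip: "locally_poly_lipschitz D N \<gamma>"
    using gamma_locally_poly_lipschitz[OF deriv slope] unfolding \<gamma>_def by force
  obtain C where C: "\<And>z. 0 \<le> z \<Longrightarrow> C \<le> \<gamma> z"
    using gamma_bdd unfolding \<gamma>_def by blast
  have "continuous_on {0..} a"
    using deriv by (auto simp: continuous_on_eq_continuous_within intro: DERIV_continuous)
  then have \<gamma>_cont: "continuous_on {0..} \<gamma>"
    unfolding \<gamma>_def by (intro continuous_intros cont_deriv) auto
  show ?thesis
    using brownian_bridge3_exp_integral_lipschitz[OF BB \<gamma>_cont \<gamma>_lip D C] x_pos
    unfolding \<gamma>_def by simp
qed

end
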